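(* Let $k\ge2$ and let $\mathcal{H}=(V,E)$ be a $k$-uniform linear hypergraph with $n$ vertices satisfying $n\le k^2+k-2$. Then $\mathrm{q}(\mathcal{H})\le \Delta([\mathcal{H}]_2)+1$.
   Context: A hypergraph $\mathcal{H}=(V,E)$ has a finite vertex set $V$ and a finite set $E$ of nonempty subsets of $V$ (hyperedges); linear means distinct hyperedges share at most one vertex; $k$-uniform means every hyperedge has $k$ elements. The 2-section $[\mathcal{H}]_2$ is the simple graph on $V$ where distinct vertices are adjacent iff some hyperedge contains both; $\Delta([\mathcal{H}]_2)$ is its maximum degree. The chromatic index $\mathrm{q}(\mathcal{H})$ is the least number of colors in a coloring of hyperedges where distinct intersecting hyperedges get different colors. *)

theory Defs
  imports Main
begin

definition hypergraph :: "'a set \<Rightarrow> 'a set set \<Rightarrow> bool" where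
  "hypergraph V E \<longleftrightarrow> finite V \<and> finite E \<and> (\<forall>e\<in>E. e \<noteq> {} \<and> e \<subseteq> V)"

definition linear_hg :: "'a set set \<Rightarrow> bool" where
  "linear_hg E \<longleftrightarrow> (\<forall>e\<in>E. \<forall>f\<in>E. e \<noteq> f \<longrightarrow> card (e \<inter> f) \<le> 1)"

definition uniform_hg :: "nat \<Rightarrow> 'a set set \<Rightarrow> bool" where
  "uniform_hg k E \<longleftrightarrow> (\<forall>e\<in>E. card e = k)"

text \<open>Adjacency in the 2-section: distinct vertices lying in a common hyperedge.\<close>
definition adj2 :: "'a set set \<Rightarrow> 'a \<Rightarrow> 'a \<Rightarrow> bool" where
  "adj2 E u v \<longleftrightarrow> u \<noteq> v \<and> (\<exists>e\<in>E. u \<in> e \<and> v \<in> e)"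

definition deg2 :: "'a set \<Rightarrow> 'a set set \<Rightarrow> 'a \<Rightarrow> nat" where
  "deg2 V E u = card {v\<in>V. adj2 E u v}"

definition maxdeg2 :: "'a set \<Rightarrow> 'a set set \<Rightarrow> nat" where
  "maxdeg2 V E = Max (insert 0 (deg2 V E ` V))"

definition proper_edge_colouring :: "'a set set \<Rightarrow> nat \<Rightarrow> ('a set \<Rightarrow> nat) \<Rightarrow> bool" where
  "proper_edge_colouring E q c \<longleftrightarrow>
     (\<forall>e\<in>E. c e < q) \<and> (\<forall>e\<in>E. \<forall>f\<in>E. e \<noteq> f \<and> e \<inter> f \<noteq> {} \<longrightarrow> c e \<noteq> c f)"

definition chromatic_index :: "'a set set \<Rightarrow> nat" where
  "chromatic_index E = (LEAST q. \<exists>c. proper_edge_colouring E q c)"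

end

(* A vertex v lies in at most k + 1 edges: its d(v) edges pairwise meet only in v, so v has
   (k - 1) d(v) neighbours, while (k + 2)(k - 1) = k^2 + k - 2 exceeds n - 1.

   Colour greedily, each time setting aside an edge that meets at most Delta other edges, where
   Delta = max (k - 1) d(v) is the maximum degree of the 2-section. If no edge of a subfamily F
   is that sparse, summing d(v) - 1 over one edge forces every vertex of F to have degree exactly
   k + 1 and Delta >= k^2 - 1. Such an F is an affine plane of order k: it covers k^2 points, any
   two of them lie on a common edge, and its k^2 + k edges fall into parallel classes of at least
   k edges each. Two parallel classes get one colour each and the at most k^2 - k remaining edges
   get distinct colours, so k^2 <= Delta + 1 colours suffice. *)

theory Submission
  imports Defs
begin

definition hdegree :: "'a set set \<Rightarrow> 'a \<Rightarrow> nat" where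
  "hdegree F v = card {e\<in>F. v \<in> e}"

definition neighbours :: "'a set set \<Rightarrow> 'a \<Rightarrow> 'a set" where
  "neighbours F v = (\<Union>e\<in>{e\<in>F. v \<in> e}. e - {v})"

definition meeting_edges :: "'a set set \<Rightarrow> 'a set \<Rightarrow> 'a set set" where
  "meeting_edges F e = {f\<in>F. f \<noteq> e \<and> f \<inter> e \<noteq> {}}"

definition parallel_class :: "'a set set \<Rightarrow> 'a set \<Rightarrow> 'a set set" where
  "parallel_class F e = {f\<in>F. f = e \<or> f \<inter> e = {}}"

definition degree_regular :: "'a set set \<Rightarrow> nat \<Rightarrow> bool" where
  "degree_regular F r \<longleftrightarrow> (\<forall>v\<in>\<Union>F. hdegree F v = r)"

lemma neighbours_subset: "neighbours F v \<subseteq> \<Union>F - {v}"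
  unfolding neighbours_def by auto

lemma hdegree_mono: "F \<subseteq> G \<Longrightarrow> finite G \<Longrightarrow> hdegree F v \<le> hdegree G v"
  unfolding hdegree_def by (intro card_mono) auto

lemma parallel_class_subset: "parallel_class F e \<subseteq> F"
  unfolding parallel_class_def by auto

lemma card_meeting_edges_le:
  assumes "finite F" "e \<in> F" "finite e"
  shows "card (meeting_edges F e) + card e \<le> (\<Sum>v\<in>e. hdegree F v)"
proof -
  have pos: "1 \<le> hdegree F v" if "v \<in> e" for v
    using assms that unfolding hdegree_def by (auto simp: Suc_le_eq card_gt_0_iff)
  have "meeting_edges F e = (\<Union>v\<in>e. {f\<in>F. v \<in> f} - {e})"
    unfolding meeting_edges_def by auto
  then have "card (meeting_edges F e) \<le> (\<Sum>v\<in>e. card ({f\<in>F. v \<in> f} - {e}))"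
    using card_UN_le[OF \<open>finite e\<close>, of "\<lambda>v. {f\<in>F. v \<in> f} - {e}"] by argo
  also have "\<dots> = (\<Sum>v\<in>e. hdegree F v - 1)"
    using assms by (intro sum.cong) (auto simp: hdegree_def)
  also have "\<dots> = (\<Sum>v\<in>e. hdegree F v) - card e"
    using pos by (simp add: sum_subtractf_nat)
  finally show ?thesis
    using sum_mono[of e "\<lambda>_. 1" "hdegree F"] pos by simp
qed

lemma proper_edge_colouring_mono:
  "proper_edge_colouring F q c \<Longrightarrow> q \<le> q' \<Longrightarrow> proper_edge_colouring F q' c"
  unfolding proper_edge_colouring_def by fastforce

lemma proper_edge_colouring_extend:
  assumes c: "proper_edge_colouring (F - {e}) q c" and "finite F"
    and few: "card (meeting_edges F e) < q"
  shows "\<exists>c'. proper_edge_colouring F q c'"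
proof -
  have fin: "finite (meeting_edges F e)"
    using \<open>finite F\<close> by (simp add: meeting_edges_def)
  have "card (c ` meeting_edges F e) < card {0..<q}"
    using card_image_le[OF fin, of c] few by simp
  then have "\<not> {0..<q} \<subseteq> c ` meeting_edges F e"
    using card_mono[of "c ` meeting_edges F e" "{0..<q}"] fin by auto
  then obtain a where a: "a \<in> {0..<q}" "a \<notin> c ` meeting_edges F e" by blast
  have "proper_edge_colouring F q (c(e := a))"
    using c a unfolding proper_edge_colouring_def meeting_edges_def by (auto simp: Int_commute)
  then show ?thesis by blast
qed

lemma proper_edge_colouring_greedy:
  assumes "finite F"
    and dense: "\<And>G. G \<subseteq> F \<Longrightarrow> G \<noteq> {} \<Longrightarrow> \<forall>e\<in>G. q \<le> card (meeting_edges G e) \<Longrightarrow>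
      \<exists>c. proper_edge_colouring G q c"
  shows "\<exists>c. proper_edge_colouring F q c"
proof -
  have "\<exists>c. proper_edge_colouring G q c" if "G \<subseteq> F" for G
    using finite_subset[OF that assms(1)] that
  proof (induction G rule: finite_psubset_induct)
    case (psubset G)
    show ?case
    proof (cases "\<exists>e\<in>G. card (meeting_edges G e) < q")
      case True
      then obtain e where "e \<in> G" "card (meeting_edges G e) < q" by blast
      moreover from \<open>e \<in> G\<close> obtain c where "proper_edge_colouring (G - {e}) q c"
        using psubset.IH psubset.prems by blast
      ultimately show ?thesis using proper_edge_colouring_extend psubset.hyps by blast
    next
      case False
      then show ?thesis
        using dense[OF psubset.prems]
        by (cases "G = {}") (auto simp: proper_edge_colouring_def not_less)
    qed
  qed
  then show ?thesis by blast
qed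

lemma proper_edge_colouring_two_matchings:
  assumes "finite F" "A \<subseteq> F" "B \<subseteq> F" "A \<inter> B = {}"
    and "pairwise disjnt A" "pairwise disjnt B"
  shows "\<exists>c. proper_edge_colouring F (card F - card A - card B + 2) c"
proof -
  define R where "R = F - A - B"
  have "R = F - (A \<union> B)" by (auto simp: R_def)
  moreover have "card (A \<union> B) = card A + card B"
    using assms by (intro card_Un_disjoint) (auto intro: finite_subset)
  ultimately have card_R: "card R = card F - card A - card B"
    using assms by (simp add: card_Diff_subset finite_subset)
  have "finite R" using \<open>finite F\<close> by (simp add: R_def)
  then obtain h where h: "bij_betw h R {0..<card R}"
    using ex_bij_betw_finite_nat by blast
  define c where "c f = (if f \<in> A then 0 else if f \<in> B then 1 else h f + 2)" for f
  have "proper_edge_colouring F (card R + 2) c"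
    unfolding proper_edge_colouring_def
  proof (intro conjI ballI impI)
    fix f assume "f \<in> F"
    show "c f < card R + 2"
    proof (cases "f \<in> R")
      case True
      then show ?thesis using bij_betwE[OF h] by (auto simp: c_def R_def)
    qed (use \<open>f \<in> F\<close> in \<open>auto simp: c_def R_def\<close>)
  next
    fix f g assume f: "f \<in> F" and g: "g \<in> F" and fg: "f \<noteq> g \<and> f \<inter> g \<noteq> {}"
    then have "\<not> (f \<in> A \<and> g \<in> A)" "\<not> (f \<in> B \<and> g \<in> B)"
      using assms(5,6) unfolding pairwise_def disjnt_def by blast+
    moreover have "f \<in> A \<Longrightarrow> f \<notin> B" "g \<in> A \<Longrightarrow> g \<notin> B"
      using assms(4) by blast+
    moreover have "h f \<noteq> h g" if "f \<in> R" "g \<in> R"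
      using bij_betw_imp_inj_on[OF h] that fg by (auto dest: inj_onD)
    ultimately show "c f \<noteq> c g"
      using f g by (auto simp: c_def R_def)
  qed
  then show ?thesis using card_R by auto
qed

lemma degrees_saturated_if_sum_large:
  fixes d :: "'a \<Rightarrow> nat"
  assumes "finite e" "card e = k"
    and le: "\<forall>v\<in>e. d v \<le> k + 1" and M: "\<forall>v\<in>e. (k - 1) * d v \<le> M"
    and large: "M + k < (\<Sum>v\<in>e. d v)"
  shows "(\<forall>v\<in>e. d v = k + 1) \<and> k^2 \<le> M + 1"
proof -
  have "(k - 1) * (M + k + 1) \<le> (k - 1) * (\<Sum>v\<in>e. d v)"
    using large by (intro mult_le_mono2) simp
  also have "\<dots> = (\<Sum>v\<in>e. (k - 1) * d v)" by (simp add: sum_distrib_left)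
  also have "\<dots> \<le> k * M" using sum_mono[of e _ "\<lambda>_. M"] M assms(2) by simp
  finally have "(k - 1) * (M + k + 1) \<le> k * M" .
  then have Mk: "k^2 \<le> M + 1"
    by (cases k) (auto simp: power2_eq_square algebra_simps)
  have "\<forall>v\<in>e. d v = k + 1"
  proof (rule ccontr)
    assume "\<not> ?thesis"
    then have "(\<Sum>v\<in>e. d v) < (\<Sum>v\<in>e. k + 1)"
      using le sum_strict_mono_ex1[OF \<open>finite e\<close>, of d "\<lambda>_. k + 1"] by fastforce
    then show False using large Mk assms(2) by (simp add: power2_eq_square algebra_simps)
  qed
  with Mk show ?thesis by blast
qed

locale linear_uniform_hypergraph =
  fixes V :: "'a set" and E :: "'a set set" and k :: nat
  assumes hypergraph: "hypergraph V E"
    and uniform: "uniform_hg k E"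
    and linear: "linear_hg E"
begin

lemma finite_V: "finite V"
  using hypergraph by (simp add: hypergraph_def)

lemma finite_E: "finite E"
  using hypergraph by (simp add: hypergraph_def)

lemma edge_subset_V: "e \<in> E \<Longrightarrow> e \<subseteq> V"
  using hypergraph by (simp add: hypergraph_def)

lemma card_edge: "e \<in> E \<Longrightarrow> card e = k"
  using uniform by (simp add: uniform_hg_def)

lemma finite_edge: "e \<in> E \<Longrightarrow> finite e"
  using edge_subset_V finite_V finite_subset by blast

lemma finite_subfamily: "F \<subseteq> E \<Longrightarrow> finite F"
  using finite_E finite_subset by blast

lemma finite_Union_subfamily: "F \<subseteq> E \<Longrightarrow> finite (\<Union>F)"
  using finite_subfamily finite_edge by blast

lemma edges_eq_if_share_two:
  assumes "e \<in> E" "f \<in> E" "x \<in> e" "x \<in> f" "y \<in> e" "y \<in> f" "x \<noteq> y"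
  shows "e = f"
proof (rule ccontr)
  assume "e \<noteq> f"
  then have "card (e \<inter> f) \<le> 1"
    using linear assms(1,2) by (simp add: linear_hg_def)
  moreover have "card {x, y} \<le> card (e \<inter> f)"
    using assms finite_edge by (intro card_mono) auto
  ultimately show False using \<open>x \<noteq> y\<close> by simp
qed

lemma card_neighbours:
  assumes "F \<subseteq> E"
  shows "card (neighbours F v) = hdegree F v * (k - 1)"
proof -
  have "card (neighbours F v) = (\<Sum>e\<in>{e\<in>F. v \<in> e}. card (e - {v}))"
    unfolding neighbours_def
  proof (rule card_UN_disjoint)
    show "finite {e\<in>F. v \<in> e}"
      using finite_subfamily[OF assms] by simp
    show "\<forall>e\<in>{e\<in>F. v \<in> e}. finite (e - {v})"
      using assms finite_edge by auto
    show "\<forall>e\<in>{e\<in>F. v \<in> e}. \<forall>f\<in>{e\<in>F. v \<in> e}. e \<noteq> f \<longrightarrow> (e - {v}) \<inter> (f - {v}) = {}"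
      using assms edges_eq_if_share_two by blast
  qed
  also have "\<dots> = (\<Sum>e\<in>{e\<in>F. v \<in> e}. k - 1)"
    using assms by (intro sum.cong) (auto simp: card_edge)
  finally show ?thesis by (simp add: hdegree_def)
qed

lemma deg2_eq_hdegree: "deg2 V E v = (k - 1) * hdegree E v"
proof -
  have "{w\<in>V. adj2 E v w} = neighbours E v"
    using edge_subset_V unfolding neighbours_def adj2_def by auto
  then show ?thesis
    using card_neighbours[of E v] by (simp add: deg2_def mult.commute)
qed

lemma hdegree_le_maxdeg2:
  assumes "F \<subseteq> E" "v \<in> V"
  shows "(k - 1) * hdegree F v \<le> maxdeg2 V E"
proof -
  have "(k - 1) * hdegree F v \<le> deg2 V E v"
    using hdegree_mono[OF assms(1) finite_E] by (simp add: deg2_eq_hdegree)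
  also have "\<dots> \<le> maxdeg2 V E"
    unfolding maxdeg2_def using assms(2) finite_V by (intro Max_ge) auto
  finally show ?thesis .
qed

lemma degree_regular_double_count:
  assumes "F \<subseteq> E" "degree_regular F r"
  shows "card F * k = r * card (\<Union>F)"
proof -
  have "(\<Sum>e\<in>F. card {v\<in>\<Union>F. v \<in> e}) = r * card (\<Union>F)"
    using assms finite_subfamily finite_Union_subfamily
    by (intro sum_multicount) (auto simp: degree_regular_def hdegree_def)
  moreover have "card {v\<in>\<Union>F. v \<in> e} = k" if "e \<in> F" for e
  proof -
    have "{v\<in>\<Union>F. v \<in> e} = e" using that by auto
    then show ?thesis using that assms(1) card_edge by auto
  qed
  ultimately show ?thesis by simp
qed

(* Playfair's axiom: a common point of two edges parallel to g would also lie on the k edges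
   joining it to the points of g, giving it degree k + 2. *)
lemma parallel_class_pairwise_disjnt:
  assumes F: "F \<subseteq> E" and g: "g \<in> F"
    and deg: "\<forall>u\<in>\<Union>F. hdegree F u \<le> k + 1"
    and collinear: "\<forall>u\<in>\<Union>F. \<forall>w\<in>\<Union>F. u \<noteq> w \<longrightarrow> (\<exists>e\<in>F. u \<in> e \<and> w \<in> e)"
  shows "pairwise disjnt (parallel_class F g)"
proof (rule pairwiseI, rule ccontr)
  fix f1 f2
  assume f1: "f1 \<in> parallel_class F g" and f2: "f2 \<in> parallel_class F g"
    and "f1 \<noteq> f2" and "\<not> disjnt f1 f2"
  then obtain u where u: "u \<in> f1" "u \<in> f2" by (auto simp: disjnt_def)
  have f12: "f1 \<in> F" "f2 \<in> F" "f1 \<inter> g = {}" "f2 \<inter> g = {}"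
    using f1 f2 u \<open>f1 \<noteq> f2\<close> unfolding parallel_class_def by auto
  then have "u \<notin> g" "u \<in> \<Union>F" using u by auto
  define H where "H = {h\<in>F. u \<in> h \<and> h \<inter> g \<noteq> {}}"
  have "finite H" using finite_subfamily[OF F] by (simp add: H_def)
  have "g \<subseteq> (\<Union>h\<in>H. h \<inter> g)"
  proof
    fix w assume "w \<in> g"
    then have "w \<in> \<Union>F" "u \<noteq> w" using g \<open>u \<notin> g\<close> by auto
    then obtain h where "h \<in> F" "u \<in> h" "w \<in> h"
      using collinear \<open>u \<in> \<Union>F\<close> by blast
    with \<open>w \<in> g\<close> show "w \<in> (\<Union>h\<in>H. h \<inter> g)" by (auto simp: H_def)
  qed
  have "finite g" using finite_edge F g by blast
  then have "card g \<le> card (\<Union>h\<in>H. h \<inter> g)"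
    using \<open>finite H\<close> \<open>g \<subseteq> _\<close> by (intro card_mono) auto
  also have "\<dots> \<le> (\<Sum>h\<in>H. card (h \<inter> g))"
    by (rule card_UN_le[OF \<open>finite H\<close>])
  also have "\<dots> \<le> (\<Sum>h\<in>H. 1)"
  proof (rule sum_mono)
    fix h assume "h \<in> H"
    then have "h \<noteq> g" "h \<in> E" using \<open>u \<notin> g\<close> F by (auto simp: H_def)
    then show "card (h \<inter> g) \<le> 1" using linear g F by (auto simp: linear_hg_def)
  qed
  finally have "k \<le> card H" using card_edge F g by auto
  have "H \<union> {f1, f2} \<subseteq> {h\<in>F. u \<in> h}" using f12 u by (auto simp: H_def)
  then have "card (H \<union> {f1, f2}) \<le> hdegree F u"
    unfolding hdegree_def using finite_subfamily[OF F] by (intro card_mono) auto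
  moreover have "card (H \<union> {f1, f2}) = card H + 2"
    using \<open>finite H\<close> f12 \<open>f1 \<noteq> f2\<close> by (subst card_Un_disjoint) (auto simp: H_def)
  ultimately show False
    using \<open>k \<le> card H\<close> deg \<open>u \<in> \<Union>F\<close> by fastforce
qed

end

locale small_linear_uniform_hypergraph = linear_uniform_hypergraph +
  assumes two_le_k: "2 \<le> k" and card_V_le: "card V \<le> k^2 + k - 2"
begin

lemma hdegree_le:
  assumes "F \<subseteq> E" "v \<in> V"
  shows "hdegree F v \<le> k + 1"
proof -
  have "0 < card V" using assms(2) finite_V card_gt_0_iff by blast
  have "neighbours E v \<subseteq> V - {v}"
    using neighbours_subset[of E v] edge_subset_V by auto
  then have "hdegree E v * (k - 1) \<le> card V - 1"
    using card_neighbours[of E v] card_mono[OF _ \<open>neighbours E v \<subseteq> V - {v}\<close>] finite_V assms(2)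
    by simp
  also have "\<dots> < (k + 2) * (k - 1)"
    using card_V_le two_le_k \<open>0 < card V\<close> by (simp add: power2_eq_square algebra_simps)
  finally have "hdegree E v < k + 2"
    using mult_less_cancel2 by blast
  then show ?thesis
    using hdegree_mono[OF assms(1) finite_E, of v] by simp
qed

lemma card_neighbours_degree_regular:
  assumes F: "F \<subseteq> E" and reg: "degree_regular F (k + 1)" and u: "u \<in> \<Union>F"
  shows "card (neighbours F u) = k^2 - 1"
proof -
  have "hdegree F u = k + 1" using reg u unfolding degree_regular_def by blast
  then show ?thesis
    using card_neighbours[OF F, of u] by (simp add: power2_eq_square algebra_simps)
qed

(* Double counting makes card (\<Union>F) a multiple of k; the neighbours of one point show
   card (\<Union>F) \<ge> k^2, and card (\<Union>F) \<le> card V < k^2 + k. *)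
lemma degree_regular_card_Union:
  assumes F: "F \<subseteq> E" and "F \<noteq> {}" and reg: "degree_regular F (k + 1)"
  shows "card (\<Union>F) = k^2"
proof -
  have "card F * k = k * card (\<Union>F) + card (\<Union>F)"
    using degree_regular_double_count[OF F reg] by simp
  then have "k dvd card (\<Union>F)"
    by (metis dvd_add_right_iff dvd_triv_left dvd_triv_right)
  then obtain q where q: "card (\<Union>F) = k * q" by (elim dvdE)
  obtain e where e: "e \<in> F" using \<open>F \<noteq> {}\<close> by blast
  then obtain v where "v \<in> e"
    using card_edge[of e] F two_le_k by fastforce
  then have "v \<in> \<Union>F" using e by blast
  have "card (neighbours F v) \<le> card (\<Union>F - {v})"
    using neighbours_subset[of F v] finite_Union_subfamily[OF F] by (intro card_mono) auto
  moreover have "0 < card (\<Union>F)"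
    using \<open>v \<in> \<Union>F\<close> finite_Union_subfamily[OF F] card_gt_0_iff by blast
  moreover have "1 \<le> k^2" using two_le_k by simp
  ultimately have "k^2 \<le> card (\<Union>F)"
    using card_neighbours_degree_regular[OF F reg \<open>v \<in> \<Union>F\<close>]
      finite_Union_subfamily[OF F] \<open>v \<in> \<Union>F\<close> by simp
  then have "k * k \<le> k * q" using q by (simp add: power2_eq_square)
  moreover have "k * q < k * (k + 1)"
  proof -
    have "card (\<Union>F) \<le> card V"
      using F edge_subset_V finite_V by (intro card_mono) auto
    then show ?thesis using q card_V_le two_le_k by (simp add: power2_eq_square algebra_simps)
  qed
  ultimately have "q = k" by (simp only: mult_less_cancel1) simp
  then show ?thesis using q by (simp add: power2_eq_square)
qed

lemma degree_regular_card:
  assumes F: "F \<subseteq> E" and "F \<noteq> {}" and reg: "degree_regular F (k + 1)"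
  shows "card F = k^2 + k"
proof -
  have "card F * k = (k^2 + k) * k"
    using degree_regular_double_count[OF F reg] degree_regular_card_Union[OF assms]
    by (simp add: power2_eq_square algebra_simps)
  then show ?thesis using two_le_k by simp
qed

lemma degree_regular_collinear:
  assumes F: "F \<subseteq> E" and reg: "degree_regular F (k + 1)"
    and uw: "u \<in> \<Union>F" "w \<in> \<Union>F" "u \<noteq> w"
  shows "\<exists>e\<in>F. u \<in> e \<and> w \<in> e"
proof -
  have "F \<noteq> {}" using uw by blast
  have "card (neighbours F u) = k^2 - 1"
    using card_neighbours_degree_regular[OF F reg \<open>u \<in> \<Union>F\<close>] .
  also have "\<dots> = card (\<Union>F - {u})"
    using degree_regular_card_Union[OF F \<open>F \<noteq> {}\<close> reg] uw finite_Union_subfamily[OF F] by simp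
  finally have "neighbours F u = \<Union>F - {u}"
    by (rule card_subset_eq[OF finite_Diff[OF finite_Union_subfamily[OF F]] neighbours_subset])
  then show ?thesis using uw by (auto simp: neighbours_def)
qed

lemma card_parallel_class_ge:
  assumes F: "F \<subseteq> E" and reg: "degree_regular F (k + 1)" and g: "g \<in> F"
  shows "k \<le> card (parallel_class F g)"
proof -
  have "F = parallel_class F g \<union> meeting_edges F g"
    by (auto simp: parallel_class_def meeting_edges_def)
  then have "card F \<le> card (parallel_class F g) + card (meeting_edges F g)"
    by (metis card_Un_le)
  moreover have "card (meeting_edges F g) + k \<le> k * (k + 1)"
  proof -
    have "finite g" "card g = k" using g F finite_edge card_edge by auto
    moreover have "(\<Sum>v\<in>g. hdegree F v) = (\<Sum>v\<in>g. k + 1)"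
      using reg g by (intro sum.cong) (auto simp: degree_regular_def)
    ultimately have "(\<Sum>v\<in>g. hdegree F v) = k * (k + 1)" by simp
    then show ?thesis
      using card_meeting_edges_le[OF finite_subfamily[OF F] g \<open>finite g\<close>] \<open>card g = k\<close> by simp
  qed
  moreover have "card F = k^2 + k"
    using degree_regular_card[OF F _ reg] g by blast
  ultimately show ?thesis by (simp add: power2_eq_square algebra_simps)
qed

lemma degree_regular_colouring:
  assumes F: "F \<subseteq> E" and "F \<noteq> {}" and reg: "degree_regular F (k + 1)"
  shows "\<exists>c. proper_edge_colouring F (k^2) c"
proof -
  obtain e where e: "e \<in> F" using \<open>F \<noteq> {}\<close> by blast
  then obtain v where v: "v \<in> e"
    using card_edge[of e] F two_le_k by fastforce
  have "\<not> {h\<in>F. v \<in> h} \<subseteq> {e}"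
  proof
    assume "{h\<in>F. v \<in> h} \<subseteq> {e}"
    then have "hdegree F v \<le> 1"
      unfolding hdegree_def using card_mono[of "{e}"] by fastforce
    then show False using reg e v two_le_k by (auto simp: degree_regular_def)
  qed
  then obtain f where f: "f \<in> F" "v \<in> f" "f \<noteq> e" by blast
  have matching: "pairwise disjnt (parallel_class F h)" if "h \<in> F" for h
    using parallel_class_pairwise_disjnt[OF F that] degree_regular_collinear[OF F reg] reg
    by (simp add: degree_regular_def)
  have "parallel_class F e \<inter> parallel_class F f = {}"
  proof (rule ccontr)
    assume "parallel_class F e \<inter> parallel_class F f \<noteq> {}"
    then obtain h where h: "h \<in> parallel_class F e" "h \<in> parallel_class F f" by blast
    then have "e \<in> parallel_class F h" "f \<in> parallel_class F h"
      using e f v by (auto simp: parallel_class_def)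
    moreover have "h \<in> F" using h parallel_class_subset by blast
    ultimately show False
      using matching f e v unfolding pairwise_def disjnt_def by blast
  qed
  then obtain c where
    "proper_edge_colouring F (card F - card (parallel_class F e) - card (parallel_class F f) + 2) c"
    using proper_edge_colouring_two_matchings[OF finite_subfamily[OF F] parallel_class_subset
        parallel_class_subset _ matching[OF e] matching[OF f(1)]]
    by blast
  moreover have "card F - card (parallel_class F e) - card (parallel_class F f) + 2 \<le> k^2"
    using degree_regular_card[OF assms] le_square[of k] card_parallel_class_ge[OF F reg e]
      card_parallel_class_ge[OF F reg f(1)] two_le_k
    unfolding power2_eq_square by linarith
  ultimately show ?thesis using proper_edge_colouring_mono by blast
qed

lemma proper_edge_colouring_if_dense:
  assumes F: "F \<subseteq> E" "F \<noteq> {}"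
    and dense: "\<forall>e\<in>F. maxdeg2 V E < card (meeting_edges F e)"
  shows "\<exists>c. proper_edge_colouring F (maxdeg2 V E + 1) c"
proof -
  have saturated: "(\<forall>v\<in>e. hdegree F v = k + 1) \<and> k^2 \<le> maxdeg2 V E + 1" if e: "e \<in> F" for e
  proof (rule degrees_saturated_if_sum_large)
    have "e \<in> E" "e \<subseteq> V" using e F edge_subset_V by auto
    then show "finite e" "card e = k" by (auto simp: finite_edge card_edge)
    show "\<forall>v\<in>e. hdegree F v \<le> k + 1"
      using hdegree_le[OF F(1)] \<open>e \<subseteq> V\<close> by blast
    show "\<forall>v\<in>e. (k - 1) * hdegree F v \<le> maxdeg2 V E"
      using hdegree_le_maxdeg2[OF F(1)] \<open>e \<subseteq> V\<close> by blast
    show "maxdeg2 V E + k < (\<Sum>v\<in>e. hdegree F v)"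
      using card_meeting_edges_le[OF finite_subfamily[OF F(1)] e \<open>finite e\<close>] dense e \<open>card e = k\<close>
      by fastforce
  qed
  then have "degree_regular F (k + 1)" by (auto simp: degree_regular_def)
  then obtain c where "proper_edge_colouring F (k^2) c"
    using degree_regular_colouring F by blast
  moreover have "k^2 \<le> maxdeg2 V E + 1" using saturated F(2) by blast
  ultimately show ?thesis using proper_edge_colouring_mono by blast
qed

end

theorem theorem5p2:
  fixes V :: "'a set" and E :: "'a set set" and k :: nat
  assumes "k \<ge> 2"
    and "hypergraph V E"
    and "uniform_hg k E"
    and "linear_hg E"
    and "card V \<le> k^2 + k - 2"
  shows "chromatic_index E \<le> maxdeg2 V E + 1"
proof -
  interpret small_linear_uniform_hypergraph V E k
    using assms by unfold_locales
  have "\<exists>c. proper_edge_colouring E (maxdeg2 V E + 1) c"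
    by (rule proper_edge_colouring_greedy[OF finite_E], rule proper_edge_colouring_if_dense) auto
  then show ?thesis
    unfolding chromatic_index_def by (metis Least_le)
qed

end
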